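(* Let $(\Phi,\mathtt{Prg},\mathrm{AT})$ be a CLC SPL with $\Phi=(\mathcal F,\phi)$. If a judgment $\theta;\Delta\vdash e:T$ occurs in a derivation of $\phi\vdash\mathtt{Prg}\ \textsc{ok}$ in the family-based type system, then $\theta\models\mathrm{AT}(T)$.
   Context: $\theta\models\theta'$ means $\theta\Rightarrow\theta'$ is a valid propositional formula. **Lightweight C (LC).** Types: $T ::= \mathtt{int}\mid \mathtt{void}* \mid \mathtt{struct}\ s*$. Expressions: $e ::= n \mid \mathtt{NULL}\mid x \mid f(e_1,\dots,e_k)$ ($k\ge0$) $\mid e\texttt{->}m \mid e\texttt{->}m=e \mid e\,?\,e:e \mid (e_1,\dots,e_k)$ ($k\ge1$) $\mid \mathsf{uop}\ e\mid e\ \mathsf{bop}\ e\mid \mathtt{MALLOC}(\mathtt{struct}\ s)\mid \mathtt{MFREE}(e)$. A struct definition is $\mathtt{struct}\ s\{T_1\,m_1;\dots;T_k\,m_k;\};$; a function definition is $T_0\ f(T_1\,x_1,\dots,T_k\,x_k)\{\mathtt{return}\ e;\}$; a program $\mathtt{Prg}=\overline{SD}\ \overline{FD}$ is a sequence of struct definitions followed by function definitions (distinct names), regarded as a finite map ($\mathtt{Prg}(s)$, $\mathtt{Prg}(s)(m)=T\,m$, $\mathtt{Prg}(f)$). $\mathtt{Prg}$ is *sane* if every struct name occurring in it is defined, every function name occurring in its function definitions is defined, and $\mathtt{Prg}(\mathtt{main})=\mathtt{int\ main}()\{\mathtt{return}\ e;\}$. Operator types: unary $-:(\mathtt{int})\to\mathtt{int}$,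 $!:(T)\to\mathtt{int}$; binary arithmetic, logical and ordering operators $(\mathtt{int},\mathtt{int})\to\mathtt{int}$; $==,!=:(T,T)\to\mathtt{int}$. Subtyping $\le$: reflexive closure of $\mathtt{void}*\le\mathtt{struct}\ s*$; $\max_\le$ the greater of two comparable types. **CLC.** Feature model $\Phi=(\mathcal F,\phi)$; annotation table $\mathrm{AT}$ assigns a propositional formula over $\mathcal F$ (default $1$) to each occurrence of: struct definitions, member declarations $T\,m$, function definitions, formal parameter declarations $T\,x$, arguments of function calls, elements of parenthesized sequences. $\mathrm{AT}(\mathtt{int})=\mathrm{AT}(\mathtt{void}* )=1$, $\mathrm{AT}(\mathtt{struct}\ s* )=\mathrm{AT}(\mathtt{Prg}(s))$; $\exists(e_1,\dots,e_n)=\mathrm{AT}(e_1)||\cdots||\mathrm{AT}(e_n)$; $\mathtt{neverLast}(k,(e_1,\dots,e_n))=\,!\mathrm{AT}(e_k)||\mathrm{AT}(e_{k+1})||\cdots||\mathrm{AT}(e_n)$. $\Delta$ maps parameter names to entries $x{:}T$ with $\psi$. Rules: (FT-prg) if $\mathtt{Prg}$ is sane, $\mathrm{AT}(\mathtt{main})=1$, $\mathtt{Prg}=\overline{SD}\,\overline{FD}$, $\phi\,\&\&\,\mathrm{AT}(SD)\vdash SD\ \textsc{ok}$ for each $SD$ and $\phi\,\&\&\,\mathrm{AT}(FD)\vdash FD\ \textsc{ok}$ for each $FD$, then $\phi\vdash\mathtt{Prg}\ \textsc{ok}$. (FT-struct) if $\theta\models\mathrm{AT}(T_i m_i)\Rightarrow\mathrm{AT}(T_i)$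 for all $i$ then $\theta\vdash\mathtt{struct}\ s\{\dots\}\ \textsc{ok}$. (FT-fun) if $\theta\models\mathrm{AT}(T_0)$, $\theta\models\mathrm{AT}(T_ix_i)\Rightarrow\mathrm{AT}(T_i)$ for all $i$, $\theta;x_1{:}T_1\text{ with }\mathrm{AT}(T_1x_1),\dots\vdash e:T'$, $T'\le T_0$, then $\theta\vdash T_0f(T_1x_1,\dots,T_kx_k)\{\mathtt{return}\ e;\}\ \textsc{ok}$. (FT-int) $\theta;\Delta\vdash n:\mathtt{int}$; (FT-null) $\theta;\Delta\vdash\mathtt{NULL}:\mathtt{void}*$; (FT-par) $x{:}T$ with $\psi\in\Delta$, $\theta\models\psi$ give $\theta;\Delta\vdash x:T$. (FT-app) $\mathtt{Prg}(f)=T_0f(T_1x_1,\dots,T_kx_k)\{\dots\}$, $\theta\models\mathrm{AT}(\mathtt{Prg}(f))$, and for each $i$: $\theta;\Delta\vdash e_i:T_i'$, $T_i'\le T_i$, $\theta\models\mathrm{AT}(e_i)\Leftrightarrow\mathrm{AT}(T_ix_i)$, give $\theta;\Delta\vdash f(e_1,\dots,e_k):T_0$. (FT-member) $\theta;\Delta\vdash e_0:\mathtt{struct}\ s*$, $\mathtt{Prg}(s)(m)=T\,m$, $\theta\models\mathrm{AT}(T\,m)$ give $\theta;\Delta\vdash e_0\texttt{->}m:T$; (FT-assign) additionally $\theta;\Delta\vdash e_1:T_1$, $T_1\le T$ give $\theta;\Delta\vdash e_0\texttt{->}m=e_1:T$. (FT-cond) $\theta;\Delta\vdash e_j:T_j$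 ($j=0,1,2$), $T_3=\max_\le\{T_1,T_2\}$ give $\theta;\Delta\vdash e_0?e_1:e_2:T_3$. (FT-seq) if $\theta\models\exists(e_1,\dots,e_n)$, $\theta\,\&\&\,\mathrm{AT}(e_i);\Delta\vdash e_i:T_i$ for all $i$, $T=T_n$, and $\theta\models\mathtt{neverLast}(i,(e_1,\dots,e_n))$ whenever $T_i\ne T$, then $\theta;\Delta\vdash(e_1,\dots,e_n):T$. (FT-uop) $\theta;\Delta\vdash e_0:T_0$ and $\mathsf{uop}:(T_0)\to\mathtt{int}$ give $\theta;\Delta\vdash\mathsf{uop}\,e_0:\mathtt{int}$; (FT-bop) $\theta;\Delta\vdash e_1:T_1$, $\theta;\Delta\vdash e_2:T_2$, $T_3=\max_\le\{T_1,T_2\}$, $\mathsf{bop}:(T_3,T_3)\to\mathtt{int}$ give $\theta;\Delta\vdash e_1\mathsf{bop}\,e_2:\mathtt{int}$. (FT-malloc) $s$ defined and $\theta\models\mathrm{AT}(\mathtt{Prg}(s))$ give $\theta;\Delta\vdash\mathtt{MALLOC}(\mathtt{struct}\ s):\mathtt{struct}\ s*$. (FT-mfree) $\theta;\Delta\vdash e_0:\mathtt{struct}\ s*$ gives $\theta;\Delta\vdash\mathtt{MFREE}(e_0):\mathtt{void}*$. *)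

theory Defs
  imports Main
begin

section \<open>Propositional formulas over the feature set (the type 'f)\<close>

datatype 'f form = FTrue | FFalse | FVar 'f | FNot "'f form" | FAnd "'f form" "'f form"
  | FOr "'f form" "'f form" | FImp "'f form" "'f form" | FIff "'f form" "'f form"

primrec eval :: "('f \<Rightarrow> bool) \<Rightarrow> 'f form \<Rightarrow> bool" where
  "eval v FTrue = True"
| "eval v FFalse = False"
| "eval v (FVar x) = v x"
| "eval v (FNot a) = (\<not> eval v a)"
| "eval v (FAnd a b) = (eval v a \<and> eval v b)"
| "eval v (FOr a b) = (eval v a \<or> eval v b)"
| "eval v (FImp a b) = (eval v a \<longrightarrow> eval v b)"
| "eval v (FIff a b) = (eval v a \<longleftrightarrow> eval v b)"

definition entails :: "'f form \<Rightarrow> 'f form \<Rightarrow> bool" where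
  "entails \<theta> \<theta>' \<longleftrightarrow> (\<forall>v. eval v (FImp \<theta> \<theta>'))"

fun ors :: "'f form list \<Rightarrow> 'f form" where
  "ors [] = FFalse"
| "ors [a] = a"
| "ors (a # as) = FOr a (ors as)"

section \<open>Syntax of LC, with the annotation table embedded at the annotated occurrences\<close>

type_synonym name = string

datatype ty = TInt | TVoidPtr | TStruct name

datatype uop = UNeg | UNot

datatype bop = BPlus | BMinus | BTimes | BDiv | BMod | BAnd | BOr
  | BLt | BLe | BGt | BGe | BEq | BNeq

datatype 'f exp =
    Num int
  | Null
  | Var name
  | App name "('f exp \<times> 'f form) list"
  | Member "'f exp" name
  | Assign "'f exp" name "'f exp"
  | Cond "'f exp" "'f exp" "'f exp"
  | Seq "('f exp \<times> 'f form) list"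
  | Uop uop "'f exp"
  | Bop bop "'f exp" "'f exp"
  | Malloc name
  | Mfree "'f exp"

datatype 'f sdef = SDef (sd_name: name) (sd_members: "(ty \<times> name \<times> 'f form) list") (sd_ann: "'f form")

datatype 'f fdef = FDef (fd_ret: ty) (fd_name: name) (fd_params: "(ty \<times> name \<times> 'f form) list")
  (fd_body: "'f exp") (fd_ann: "'f form")

datatype 'f prog = Prog (structs: "'f sdef list") (funs: "'f fdef list")

definition lookup_struct :: "'f prog \<Rightarrow> name \<Rightarrow> 'f sdef option" where
  "lookup_struct P s = map_of (map (\<lambda>sd. (sd_name sd, sd)) (structs P)) s"

definition lookup_fun :: "'f prog \<Rightarrow> name \<Rightarrow> 'f fdef option" where
  "lookup_fun P f = map_of (map (\<lambda>fd. (fd_name fd, fd)) (funs P)) f"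

definition lookup_member :: "'f sdef \<Rightarrow> name \<Rightarrow> (ty \<times> 'f form) option" where
  "lookup_member sd m = map_of (map (\<lambda>(T, m, \<psi>). (m, (T, \<psi>))) (sd_members sd)) m"

definition distinct_names :: "'f prog \<Rightarrow> bool" where
  "distinct_names P \<longleftrightarrow> distinct (map sd_name (structs P)) \<and> distinct (map fd_name (funs P))
     \<and> (\<forall>sd\<in>set (structs P). distinct (map (fst \<circ> snd) (sd_members sd)))"

primrec ty_structs :: "ty \<Rightarrow> name set" where
  "ty_structs TInt = {}"
| "ty_structs TVoidPtr = {}"
| "ty_structs (TStruct s) = {s}"

fun exp_structs :: "'f exp \<Rightarrow> name set" and exp_funs :: "'f exp \<Rightarrow> name set" where
  "exp_structs (Num n) = {}"
| "exp_structs Null = {}"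
| "exp_structs (Var x) = {}"
| "exp_structs (App f args) = (\<Union>a\<in>set args. exp_structs (fst a))"
| "exp_structs (Member e m) = exp_structs e"
| "exp_structs (Assign e m e') = exp_structs e \<union> exp_structs e'"
| "exp_structs (Cond e0 e1 e2) = exp_structs e0 \<union> exp_structs e1 \<union> exp_structs e2"
| "exp_structs (Seq es) = (\<Union>a\<in>set es. exp_structs (fst a))"
| "exp_structs (Uop u e) = exp_structs e"
| "exp_structs (Bop b e1 e2) = exp_structs e1 \<union> exp_structs e2"
| "exp_structs (Malloc s) = {s}"
| "exp_structs (Mfree e) = exp_structs e"
| "exp_funs (Num n) = {}"
| "exp_funs Null = {}"
| "exp_funs (Var x) = {}"
| "exp_funs (App f args) = insert f (\<Union>a\<in>set args. exp_funs (fst a))"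
| "exp_funs (Member e m) = exp_funs e"
| "exp_funs (Assign e m e') = exp_funs e \<union> exp_funs e'"
| "exp_funs (Cond e0 e1 e2) = exp_funs e0 \<union> exp_funs e1 \<union> exp_funs e2"
| "exp_funs (Seq es) = (\<Union>a\<in>set es. exp_funs (fst a))"
| "exp_funs (Uop u e) = exp_funs e"
| "exp_funs (Bop b e1 e2) = exp_funs e1 \<union> exp_funs e2"
| "exp_funs (Malloc s) = {}"
| "exp_funs (Mfree e) = exp_funs e"

definition prog_structs :: "'f prog \<Rightarrow> name set" where
  "prog_structs P =
     (\<Union>sd\<in>set (structs P). \<Union>(T, m, \<psi>)\<in>set (sd_members sd). ty_structs T)
   \<union> (\<Union>fd\<in>set (funs P). ty_structs (fd_ret fd) \<union> (\<Union>(T, x, \<psi>)\<in>set (fd_params fd). ty_structs T)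
        \<union> exp_structs (fd_body fd))"

definition prog_funs :: "'f prog \<Rightarrow> name set" where
  "prog_funs P = (\<Union>fd\<in>set (funs P). exp_funs (fd_body fd))"

definition sane :: "'f prog \<Rightarrow> bool" where
  "sane P \<longleftrightarrow> (\<forall>s\<in>prog_structs P. lookup_struct P s \<noteq> None)
     \<and> (\<forall>f\<in>prog_funs P. lookup_fun P f \<noteq> None)
     \<and> (\<exists>e a. lookup_fun P ''main'' = Some (FDef TInt ''main'' [] e a))"

definition ann_ty :: "'f prog \<Rightarrow> ty \<Rightarrow> 'f form" where
  "ann_ty P T = (case T of TStruct s \<Rightarrow>
       (case lookup_struct P s of Some sd \<Rightarrow> sd_ann sd | None \<Rightarrow> FTrue)
     | _ \<Rightarrow> FTrue)"

definition subty :: "ty \<Rightarrow> ty \<Rightarrow> bool" where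
  "subty T T' \<longleftrightarrow> T = T' \<or> (T = TVoidPtr \<and> (\<exists>s. T' = TStruct s))"

definition max_le :: "ty \<Rightarrow> ty \<Rightarrow> ty \<Rightarrow> bool" where
  "max_le T1 T2 T3 \<longleftrightarrow> (subty T1 T2 \<and> T3 = T2) \<or> (subty T2 T1 \<and> T3 = T1)"

primrec uop_ty :: "uop \<Rightarrow> ty \<Rightarrow> bool" where
  "uop_ty UNeg T = (T = TInt)"
| "uop_ty UNot T = True"

definition bop_ty :: "bop \<Rightarrow> ty \<Rightarrow> bool" where
  "bop_ty b T = (if b \<in> {BEq, BNeq} then True else T = TInt)"

type_synonym 'f tenv = "(name \<times> ty \<times> 'f form) list"

datatype 'f judg =
    JPrg "'f form"
  | JStruct "'f form" "'f sdef"
  | JFun "'f form" "'f fdef"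
  | JExp "'f form" "'f tenv" "'f exp" ty

definition exists_ann :: "('f exp \<times> 'f form) list \<Rightarrow> 'f form" where
  "exists_ann es = ors (map snd es)"

definition neverLast :: "nat \<Rightarrow> ('f exp \<times> 'f form) list \<Rightarrow> 'f form" where
  "neverLast k es = ors (FNot (snd (es ! k)) # map snd (drop (Suc k) es))"

inductive rule :: "'f prog \<Rightarrow> 'f judg \<Rightarrow> 'f judg list \<Rightarrow> bool" for P :: "'f prog" where
  FT_prg: "\<lbrakk> sane P; lookup_fun P ''main'' = Some fd; fd_ann fd = FTrue \<rbrakk> \<Longrightarrow>
     rule P (JPrg \<phi>)
       (map (\<lambda>sd. JStruct (FAnd \<phi> (sd_ann sd)) sd) (structs P)
        @ map (\<lambda>fd. JFun (FAnd \<phi> (fd_ann fd)) fd) (funs P))"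
| FT_struct: "\<lbrakk> \<forall>(T, m, \<psi>)\<in>set ms. entails \<theta> (FImp \<psi> (ann_ty P T)) \<rbrakk> \<Longrightarrow>
     rule P (JStruct \<theta> (SDef s ms a)) []"
| FT_fun: "\<lbrakk> entails \<theta> (ann_ty P T0); \<forall>(T, x, \<psi>)\<in>set ps. entails \<theta> (FImp \<psi> (ann_ty P T));
     subty T' T0 \<rbrakk> \<Longrightarrow>
     rule P (JFun \<theta> (FDef T0 f ps e a)) [JExp \<theta> (map (\<lambda>(T, x, \<psi>). (x, T, \<psi>)) ps) e T']"
| FT_int: "rule P (JExp \<theta> \<Delta> (Num n) TInt) []"
| FT_null: "rule P (JExp \<theta> \<Delta> Null TVoidPtr) []"
| FT_par: "\<lbrakk> (x, T, \<psi>) \<in> set \<Delta>; entails \<theta> \<psi> \<rbrakk> \<Longrightarrow> rule P (JExp \<theta> \<Delta> (Var x) T) []"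
| FT_app: "\<lbrakk> lookup_fun P f = Some (FDef T0 f' ps body a); entails \<theta> a;
     length args = length ps; length Ts' = length args;
     \<forall>i<length args. subty (Ts' ! i) (fst (ps ! i))
        \<and> entails \<theta> (FIff (snd (args ! i)) (snd (snd (ps ! i)))) \<rbrakk> \<Longrightarrow>
     rule P (JExp \<theta> \<Delta> (App f args) T0)
       (map (\<lambda>i. JExp \<theta> \<Delta> (fst (args ! i)) (Ts' ! i)) [0..<length args])"
| FT_member: "\<lbrakk> lookup_struct P s = Some sd; lookup_member sd m = Some (T, \<psi>); entails \<theta> \<psi> \<rbrakk> \<Longrightarrow>
     rule P (JExp \<theta> \<Delta> (Member e0 m) T) [JExp \<theta> \<Delta> e0 (TStruct s)]"
| FT_assign: "\<lbrakk> lookup_struct P s = Some sd; lookup_member sd m = Some (T, \<psi>); entails \<theta> \<psi>;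
     subty T1 T \<rbrakk> \<Longrightarrow>
     rule P (JExp \<theta> \<Delta> (Assign e0 m e1) T) [JExp \<theta> \<Delta> e0 (TStruct s), JExp \<theta> \<Delta> e1 T1]"
| FT_cond: "max_le T1 T2 T3 \<Longrightarrow>
     rule P (JExp \<theta> \<Delta> (Cond e0 e1 e2) T3)
       [JExp \<theta> \<Delta> e0 T0, JExp \<theta> \<Delta> e1 T1, JExp \<theta> \<Delta> e2 T2]"
| FT_seq: "\<lbrakk> es \<noteq> []; entails \<theta> (exists_ann es); length Ts = length es; T = last Ts;
     \<forall>i<length es. Ts ! i \<noteq> T \<longrightarrow> entails \<theta> (neverLast i es) \<rbrakk> \<Longrightarrow>
     rule P (JExp \<theta> \<Delta> (Seq es) T)
       (map (\<lambda>i. JExp (FAnd \<theta> (snd (es ! i))) \<Delta> (fst (es ! i)) (Ts ! i)) [0..<length es])"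
| FT_uop: "uop_ty u T0 \<Longrightarrow> rule P (JExp \<theta> \<Delta> (Uop u e0) TInt) [JExp \<theta> \<Delta> e0 T0]"
| FT_bop: "\<lbrakk> max_le T1 T2 T3; bop_ty b T3 \<rbrakk> \<Longrightarrow>
     rule P (JExp \<theta> \<Delta> (Bop b e1 e2) TInt) [JExp \<theta> \<Delta> e1 T1, JExp \<theta> \<Delta> e2 T2]"
| FT_malloc: "\<lbrakk> lookup_struct P s = Some sd; entails \<theta> (sd_ann sd) \<rbrakk> \<Longrightarrow>
     rule P (JExp \<theta> \<Delta> (Malloc s) (TStruct s)) []"
| FT_mfree: "rule P (JExp \<theta> \<Delta> (Mfree e0) TVoidPtr) [JExp \<theta> \<Delta> e0 (TStruct s)]"

datatype 'f dtree = DNode (droot: "'f judg") (dsubs: "'f dtree list")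

inductive derivation :: "'f prog \<Rightarrow> 'f dtree \<Rightarrow> bool" for P :: "'f prog" where
  "\<lbrakk> rule P J (map droot ts); \<forall>t\<in>set ts. derivation P t \<rbrakk> \<Longrightarrow> derivation P (DNode J ts)"

inductive occurs_in :: "'f judg \<Rightarrow> 'f dtree \<Rightarrow> bool" where
  here: "occurs_in J (DNode J ts)"
| below: "\<lbrakk> t \<in> set ts; occurs_in J t \<rbrakk> \<Longrightarrow> occurs_in J (DNode J' ts)"

end

theory Submission
  imports Defs
begin

text \<open>
  Rule FT-prg checks every struct and function definition under \<open>\<phi> && AT(def)\<close>; hence
  \<open>\<phi> && AT(f) |= AT(T\<^sub>0)\<close> for the return type of each function and \<open>\<phi> && AT(s) |= AT(T m) => AT(T)\<close> for each member of each struct.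
  Below the function rules, every judgment \<open>\<theta>; \<Delta> |- e : T\<close> satisfies the invariant
  \<open>\<theta> |= \<phi>\<close> and \<open>\<theta> |= \<psi> => AT(T')\<close> for each entry \<open>x:T' with \<psi>\<close> of \<Delta>: FT-fun establishes it,
  and expression rules keep \<Delta> and only strengthen \<theta>. The only subtle case is a
  sequence: under a valuation satisfying \<theta>, the last element whose annotation holds
  must, by neverLast, have the type \<open>T\<close> of the whole sequence.
\<close>

lemma eval_ors: "eval v (ors as) \<longleftrightarrow> (\<exists>a\<in>set as. eval v a)"
  by (induction as rule: ors.induct) auto

lemma entails_iff: "entails \<theta> \<theta>' \<longleftrightarrow> (\<forall>v. eval v \<theta> \<longrightarrow> eval v \<theta>')"
  by (simp add: entails_def)

lemma eval_exists_ann: "eval v (exists_ann es) \<longleftrightarrow> (\<exists>i<length es. eval v (snd (es ! i)))"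
  unfolding exists_ann_def eval_ors by (metis in_set_conv_nth length_map nth_map)

lemma eval_neverLast:
  "eval v (neverLast i es) \<longleftrightarrow>
     \<not> eval v (snd (es ! i)) \<or> (\<exists>j. i < j \<and> j < length es \<and> eval v (snd (es ! j)))"
proof -
  have "(\<exists>a\<in>set (map snd (drop (Suc i) es)). eval v a) \<longleftrightarrow>
        (\<exists>k. Suc i + k < length es \<and> eval v (snd (es ! (Suc i + k))))"
    using all_set_conv_all_nth[of "map snd (drop (Suc i) es)" "\<lambda>a. \<not> eval v a"]
    by (auto simp: less_diff_conv add.commute)
  also have "\<dots> \<longleftrightarrow> (\<exists>j. i < j \<and> j < length es \<and> eval v (snd (es ! j)))"
    by (auto dest: less_imp_Suc_add) (metis less_add_Suc1)
  finally show ?thesis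
    by (simp add: neverLast_def eval_ors)
qed

lemma exists_ann_obtain_last:
  assumes "eval v (exists_ann es)"
  obtains i where "i < length es" "\<not> eval v (neverLast i es)"
proof -
  let ?S = "{i. i < length es \<and> eval v (snd (es ! i))}"
  have "finite ?S"
    by simp
  moreover have "?S \<noteq> {}"
    using assms by (simp add: eval_exists_ann)
  ultimately have "Max ?S \<in> ?S" and "\<And>j. j \<in> ?S \<Longrightarrow> j \<le> Max ?S"
    using Max_in Max_ge by blast+
  then have "Max ?S < length es" and "\<not> eval v (neverLast (Max ?S) es)"
    unfolding eval_neverLast by (auto simp: not_less[symmetric])
  then show ?thesis
    using that by blast
qed

lemma entails_seq_last:
  assumes "entails \<theta> (exists_ann es)"
    and "\<forall>i<length es. Ts ! i \<noteq> T \<longrightarrow> entails \<theta> (neverLast i es)"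
    and "\<And>i. i < length es \<Longrightarrow> entails (FAnd \<theta> (snd (es ! i))) (A (Ts ! i))"
  shows "entails \<theta> (A T)"
  unfolding entails_iff
proof (intro allI impI)
  fix v
  assume "eval v \<theta>"
  then obtain i where i: "i < length es" "\<not> eval v (neverLast i es)"
    using assms(1) exists_ann_obtain_last unfolding entails_iff by metis
  then have "Ts ! i = T"
    using assms(2) \<open>eval v \<theta>\<close> unfolding entails_iff by blast
  moreover have "eval v (snd (es ! i))"
    using i(2) by (simp add: eval_neverLast)
  ultimately show "eval v (A T)"
    using assms(3)[OF i(1)] \<open>eval v \<theta>\<close> unfolding entails_iff by auto
qed

lemma lookup_fun_in_set: "lookup_fun P f = Some fd \<Longrightarrow> fd \<in> set (funs P)"
  unfolding lookup_fun_def by (auto dest: map_of_SomeD)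

lemma lookup_struct_in_set: "lookup_struct P s = Some sd \<Longrightarrow> sd \<in> set (structs P)"
  unfolding lookup_struct_def by (auto dest: map_of_SomeD)

lemma lookup_member_in_set: "lookup_member sd m = Some (T, \<psi>) \<Longrightarrow> (T, m, \<psi>) \<in> set (sd_members sd)"
  unfolding lookup_member_def by (auto dest: map_of_SomeD)

lemma ann_ty_TStruct: "lookup_struct P s = Some sd \<Longrightarrow> ann_ty P (TStruct s) = sd_ann sd"
  by (simp add: ann_ty_def)

definition decls_ann_ok :: "'f prog \<Rightarrow> 'f form \<Rightarrow> bool" where
  "decls_ann_ok P \<phi> \<longleftrightarrow>
     (\<forall>fd\<in>set (funs P). entails (FAnd \<phi> (fd_ann fd)) (ann_ty P (fd_ret fd)))
   \<and> (\<forall>sd\<in>set (structs P). \<forall>(T, m, \<psi>)\<in>set (sd_members sd).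
        entails (FAnd \<phi> (sd_ann sd)) (FImp \<psi> (ann_ty P T)))"

lemma decls_ann_ok_app:
  assumes "decls_ann_ok P \<phi>" and "lookup_fun P f = Some (FDef T0 f' ps body a)"
    and "entails \<theta> \<phi>" and "entails \<theta> a"
  shows "entails \<theta> (ann_ty P T0)"
proof -
  have "entails (FAnd \<phi> a) (ann_ty P T0)"
    using assms(1) lookup_fun_in_set[OF assms(2)] unfolding decls_ann_ok_def by fastforce
  then show ?thesis
    using assms(3,4) by (simp add: entails_iff)
qed

lemma decls_ann_ok_member:
  assumes "decls_ann_ok P \<phi>" and "lookup_struct P s = Some sd"
    and "lookup_member sd m = Some (T, \<psi>)"
    and "entails \<theta> \<phi>" and "entails \<theta> (ann_ty P (TStruct s))" and "entails \<theta> \<psi>"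
  shows "entails \<theta> (ann_ty P T)"
proof -
  have "entails (FAnd \<phi> (sd_ann sd)) (FImp \<psi> (ann_ty P T))"
    using assms(1) lookup_struct_in_set[OF assms(2)] lookup_member_in_set[OF assms(3)]
    unfolding decls_ann_ok_def by fastforce
  then show ?thesis
    using assms(4-6) ann_ty_TStruct[OF assms(2)] by (simp add: entails_iff)
qed

definition tenv_ann_ok :: "'f prog \<Rightarrow> 'f form \<Rightarrow> 'f tenv \<Rightarrow> bool" where
  "tenv_ann_ok P \<theta> \<Delta> \<longleftrightarrow> (\<forall>(x, T, \<psi>)\<in>set \<Delta>. entails \<theta> (FImp \<psi> (ann_ty P T)))"

lemma rule_exp_ann:
  assumes "rule P (JExp \<theta> \<Delta> e T) Js"
    and prems_ann: "\<And>\<theta>' \<Delta>' e' T'. JExp \<theta>' \<Delta>' e' T' \<in> set Js \<Longrightarrow> entails \<theta>' (ann_ty P T')"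
    and "decls_ann_ok P \<phi>" and "entails \<theta> \<phi>" and "tenv_ann_ok P \<theta> \<Delta>"
  shows "entails \<theta> (ann_ty P T)"
  using assms(1)
proof (cases rule: rule.cases)
  case (FT_par x \<psi>)
  then show ?thesis
    using assms(5) unfolding tenv_ann_ok_def by (fastforce simp: entails_iff)
next
  case (FT_app f f' ps body a args Ts')
  then show ?thesis
    using decls_ann_ok_app assms(3,4) by blast
next
  case (FT_member s sd m \<psi> e0)
  have "entails \<theta> (ann_ty P (TStruct s))"
    using FT_member prems_ann[of \<theta> \<Delta> e0 "TStruct s"] by simp
  then show ?thesis
    using decls_ann_ok_member[OF assms(3) FT_member(3,4) assms(4)] FT_member(5) by simp
next
  case (FT_assign s sd m \<psi> T1 e0 e1)
  have "entails \<theta> (ann_ty P (TStruct s))"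
    using FT_assign prems_ann[of \<theta> \<Delta> e0 "TStruct s"] by simp
  then show ?thesis
    using decls_ann_ok_member[OF assms(3) FT_assign(3,4) assms(4)] FT_assign(5) by simp
next
  case (FT_cond T1 T2 e0 e1 e2 T0)
  then show ?thesis
    using prems_ann unfolding max_le_def by auto
next
  case (FT_seq es Ts)
  have "entails (FAnd \<theta> (snd (es ! i))) (ann_ty P (Ts ! i))" if "i < length es" for i
    using that by (intro prems_ann) (force simp: FT_seq)
  then show ?thesis
    using entails_seq_last[where A = "ann_ty P"] FT_seq by blast
next
  case (FT_malloc s sd)
  then show ?thesis
    by (simp add: ann_ty_TStruct)
qed (simp_all add: ann_ty_def entails_iff)

fun ctx_ok :: "'f prog \<Rightarrow> 'f form \<Rightarrow> 'f judg \<Rightarrow> bool" where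
  "ctx_ok P \<phi> (JPrg \<phi>') \<longleftrightarrow> entails \<phi>' \<phi>"
| "ctx_ok P \<phi> (JStruct \<theta> sd) \<longleftrightarrow> True"
| "ctx_ok P \<phi> (JFun \<theta> fd) \<longleftrightarrow> entails \<theta> \<phi>"
| "ctx_ok P \<phi> (JExp \<theta> \<Delta> e T) \<longleftrightarrow> entails \<theta> \<phi> \<and> tenv_ann_ok P \<theta> \<Delta>"

lemma rule_premise_ctx_ok:
  assumes "rule P J Js" and "ctx_ok P \<phi> J" and "J' \<in> set Js"
  shows "ctx_ok P \<phi> J'"
  using assms by (cases rule: rule.cases) (fastforce simp: entails_iff tenv_ann_ok_def)+

lemma derivation_root_rule: "derivation P t \<Longrightarrow> rule P (droot t) (map droot (dsubs t))"
  by (cases rule: derivation.cases) auto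

lemma derivation_subtree: "derivation P t \<Longrightarrow> u \<in> set (dsubs t) \<Longrightarrow> derivation P u"
  by (cases rule: derivation.cases) auto

lemma occurs_in_subderivation:
  "occurs_in J t \<Longrightarrow> derivation P t \<Longrightarrow> \<exists>u. derivation P u \<and> droot u = J"
  by (induction rule: occurs_in.induct) (auto dest: derivation_subtree)

lemma occurs_in_derivation_invariant:
  assumes "occurs_in J t" and "derivation P t" and "I (droot t)"
    and step: "\<And>J Js J'. rule P J Js \<Longrightarrow> I J \<Longrightarrow> J' \<in> set Js \<Longrightarrow> I J'"
  shows "I J"
  using assms(1-3)
proof (induction rule: occurs_in.induct)
  case (here J ts)
  then show ?case by simp
next
  case (below t ts J J')
  then show ?case
    using derivation_root_rule[OF below.prems(1)] derivation_subtree step by fastforce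
qed

lemma derivation_exp_ann:
  assumes "decls_ann_ok P \<phi>"
  shows "derivation P t \<Longrightarrow> ctx_ok P \<phi> (droot t) \<Longrightarrow> droot t = JExp \<theta> \<Delta> e T \<Longrightarrow>
    entails \<theta> (ann_ty P T)"
proof (induction arbitrary: \<theta> \<Delta> e T rule: derivation.induct)
  case (1 J ts)
  then have rl: "rule P (JExp \<theta> \<Delta> e T) (map droot ts)"
    and ctx: "ctx_ok P \<phi> (JExp \<theta> \<Delta> e T)"
    by simp_all
  have "entails \<theta>' (ann_ty P T')"
    if premise: "JExp \<theta>' \<Delta>' e' T' \<in> set (map droot ts)" for \<theta>' \<Delta>' e' T'
  proof -
    obtain t where t: "t \<in> set ts" "droot t = JExp \<theta>' \<Delta>' e' T'"
      using premise by auto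
    have "ctx_ok P \<phi> (droot t)"
      using rule_premise_ctx_ok[OF rl ctx premise] t(2) by simp
    then show ?thesis
      using "1.IH" t by blast
  qed
  then show ?case
    using rule_exp_ann[OF rl _ assms] ctx by simp
qed

lemma derivation_prog_decls_ann_ok:
  assumes "derivation P D" and "droot D = JPrg \<phi>"
  shows "decls_ann_ok P \<phi>"
proof -
  have "rule P (JPrg \<phi>) (map droot (dsubs D))"
    using derivation_root_rule[OF assms(1)] assms(2) by simp
  then have prems_eq: "map droot (dsubs D) =
      map (\<lambda>sd. JStruct (FAnd \<phi> (sd_ann sd)) sd) (structs P)
      @ map (\<lambda>fd. JFun (FAnd \<phi> (fd_ann fd)) fd) (funs P)"
    by (cases rule: rule.cases) simp
  have derived: "\<exists>Js. rule P J Js" if premise: "J \<in> set (map droot (dsubs D))" for J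
  proof -
    obtain u where "u \<in> set (dsubs D)" and "droot u = J"
      using premise by auto
    then show ?thesis
      using derivation_root_rule derivation_subtree[OF assms(1)] by metis
  qed
  have "entails (FAnd \<phi> (fd_ann fd)) (ann_ty P (fd_ret fd))" if "fd \<in> set (funs P)" for fd
  proof -
    have "JFun (FAnd \<phi> (fd_ann fd)) fd \<in> set (map droot (dsubs D))"
      unfolding prems_eq using that by simp
    then obtain Js where "rule P (JFun (FAnd \<phi> (fd_ann fd)) fd) Js"
      using derived by blast
    then show ?thesis
      by (cases rule: rule.cases) simp
  qed
  moreover have "\<forall>(T, m, \<psi>)\<in>set (sd_members sd). entails (FAnd \<phi> (sd_ann sd)) (FImp \<psi> (ann_ty P T))"
    if "sd \<in> set (structs P)" for sd
  proof -
    have "JStruct (FAnd \<phi> (sd_ann sd)) sd \<in> set (map droot (dsubs D))"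
      unfolding prems_eq using that by simp
    then obtain Js where "rule P (JStruct (FAnd \<phi> (sd_ann sd)) sd) Js"
      using derived by blast
    then show ?thesis
      by (cases rule: rule.cases) simp
  qed
  ultimately show ?thesis
    unfolding decls_ann_ok_def by blast
qed

theorem lemma3:
  fixes P :: "'f prog" and \<phi> :: "'f form" and D :: "'f dtree"
  assumes "distinct_names P"
    and "derivation P D"
    and "droot D = JPrg \<phi>"
    and "occurs_in (JExp \<theta> \<Delta> e T) D"
  shows "entails \<theta> (ann_ty P T)"
proof -
  have decls: "decls_ann_ok P \<phi>"
    using derivation_prog_decls_ann_ok assms(2,3) .
  have "ctx_ok P \<phi> (droot D)"
    using assms(3) by (simp add: entails_iff)
  with assms(4,2) have ctx: "ctx_ok P \<phi> (JExp \<theta> \<Delta> e T)"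
    by (rule occurs_in_derivation_invariant) (use rule_premise_ctx_ok in blast)
  obtain u where "derivation P u" and "droot u = JExp \<theta> \<Delta> e T"
    using occurs_in_subderivation[OF assms(4,2)] by blast
  then show ?thesis
    using derivation_exp_ann decls ctx by metis
qed

end
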